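(* Let $f$ be a meromorphic function on $\mathbb C^*$, holomorphic near $1$, which is odd, $f(x^{-1})=-f(x)$, and has a simple zero at $x=1$: $f(1)=0$, $f^{(1)}(1)\neq0$. Let $n\ge2$ and let the variables satisfy $t_1\cdots t_n=1$. Then $\Phi(t_1,\ldots,t_n)\to0$ as $t_1\to1$.
   Context: $f^{(k)}(x):=(x\frac{d}{dx})^kf(x)$. $\Gamma_n$ is the set of compositions of $\{1,\ldots,n\}$: ordered tuples $\gamma=(\gamma_1,\ldots,\gamma_\ell)$ of nonempty pairwise disjoint subsets with union $\{1,\ldots,n\}$, $\ell(\gamma)=\ell$; put $\upsilon(\gamma)_i=\gamma_1\cup\cdots\cup\gamma_{i-1}$. Define $$\Phi(t_1,\ldots,t_n)=\sum_{\gamma\in\Gamma_n}(-1)^{\ell(\gamma)}f^{(\#\gamma_1)}(1)\prod_{i=2}^{\ell(\gamma)}\frac{f^{(\#\gamma_i)}\big(\prod_{j\in\upsilon(\gamma)_i}t_j\big)}{f\big(\prod_{j\in\upsilon(\gamma)_i}t_j\big)}.$$ *)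

theory Defs
  imports "HOL-Complex_Analysis.Complex_Analysis"
begin

(* Euler operator: theta f (x) = x * f'(x);  f^{(k)} = (theta ^^ k) f *)
definition theta :: "(complex \<Rightarrow> complex) \<Rightarrow> (complex \<Rightarrow> complex)" where
  "theta f = (\<lambda>x. x * deriv f x)"

definition eul :: "nat \<Rightarrow> (complex \<Rightarrow> complex) \<Rightarrow> (complex \<Rightarrow> complex)" where
  "eul k f = (theta ^^ k) f"

definition compositions :: "nat \<Rightarrow> nat set list set" where
  "compositions n = {\<gamma>. (\<forall>B\<in>set \<gamma>. B \<noteq> {}) \<and>
     (\<forall>i<length \<gamma>. \<forall>j<length \<gamma>. i \<noteq> j \<longrightarrow> \<gamma> ! i \<inter> \<gamma> ! j = {}) \<and>
     \<Union>(set \<gamma>) = {1..n}}"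

(* upsilon(gamma)_i = gamma_1 \<union> ... \<union> gamma_{i-1}  (1-based i); here with 0-based list index i *)
definition upsilon :: "nat set list \<Rightarrow> nat \<Rightarrow> nat set" where
  "upsilon \<gamma> i = \<Union>(set (take i \<gamma>))"

definition Phi :: "(complex \<Rightarrow> complex) \<Rightarrow> nat \<Rightarrow> (nat \<Rightarrow> complex) \<Rightarrow> complex" where
  "Phi f n t = (\<Sum>\<gamma>\<in>compositions n.
      (-1) ^ length \<gamma> * eul (card (\<gamma> ! 0)) f 1 *
      (\<Prod>i\<in>{1..<length \<gamma>}.
         eul (card (\<gamma> ! i)) f (\<Prod>j\<in>upsilon \<gamma> i. t j) / f (\<Prod>j\<in>upsilon \<gamma> i. t j)))"

end

theory Submission
  imports Defs
begin

text \<open>Sort the compositions \<open>\<gamma>\<close> of \<open>{1..n}\<close> by the composition \<open>\<beta>\<close> of \<open>{2..n}\<close> left after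
  deleting \<open>1\<close>: either \<open>1\<close> joins the \<open>i\<close>-th block of \<open>\<beta>\<close>, or \<open>{1}\<close> is inserted as a new block at
  position \<open>k\<close>. For fixed \<open>\<beta>\<close> each such term is a product of ratios \<open>f^(b)/f\<close> at the prefix
  products \<open>q\<^sub>l\<close> of \<open>\<beta>\<close>, where \<open>q\<^sub>l\<close> becomes \<open>t\<^sub>1 q\<^sub>l\<close> for the blocks after \<open>1\<close>; genericity makes
  these ratios analytic at \<open>t\<^sub>1 = 1\<close>. Oddness gives \<open>f^(1)(1/x)/f(1/x) = - f^(1)(x)/f(x)\<close>, which
  rewrites the term with \<open>{1}\<close> in last position, and \<open>f^(2)(1) = 0\<close>. After telescoping, the terms
  belonging to \<open>\<beta>\<close> add up to a combination of brackets, each tending to \<open>0\<close> by l'Hopital's rule at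
  the simple zero \<open>x = 1\<close> together with \<open>\<theta>(f^(k)/f) = f^(k+1)/f - (f^(1)/f)(f^(k)/f)\<close>, where
  \<open>\<theta> = x d/dx\<close>.\<close>

section \<open>Compositions of a set\<close>

definition compositions_on :: "'a set \<Rightarrow> 'a set list set" where
  "compositions_on A =
     {\<gamma>. {} \<notin> set \<gamma> \<and> distinct \<gamma> \<and> pairwise disjnt (set \<gamma>) \<and> \<Union>(set \<gamma>) = A}"

lemma nth_disjoint_iff_distinct_pairwise_disjnt:
  assumes "{} \<notin> set \<gamma>"
  shows "(\<forall>i<length \<gamma>. \<forall>j<length \<gamma>. i \<noteq> j \<longrightarrow> \<gamma> ! i \<inter> \<gamma> ! j = {})
         \<longleftrightarrow> distinct \<gamma> \<and> pairwise disjnt (set \<gamma>)"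
proof
  assume disj: "\<forall>i<length \<gamma>. \<forall>j<length \<gamma>. i \<noteq> j \<longrightarrow> \<gamma> ! i \<inter> \<gamma> ! j = {}"
  have "\<gamma> ! i \<noteq> \<gamma> ! j" if "i < length \<gamma>" "j < length \<gamma>" "i \<noteq> j" for i j
  proof
    assume "\<gamma> ! i = \<gamma> ! j"
    with disj that have "\<gamma> ! i = {}"
      by auto
    with assms nth_mem[OF \<open>i < length \<gamma>\<close>] show False
      by simp
  qed
  then have "distinct \<gamma>"
    by (simp add: distinct_conv_nth)
  moreover have "pairwise disjnt (set \<gamma>)"
  proof (rule pairwiseI)
    fix B C assume "B \<in> set \<gamma>" "C \<in> set \<gamma>" "B \<noteq> C"
    then obtain i j where "i < length \<gamma>" "j < length \<gamma>" "B = \<gamma> ! i" "C = \<gamma> ! j"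
      by (auto simp: in_set_conv_nth)
    with disj \<open>B \<noteq> C\<close> show "disjnt B C"
      unfolding disjnt_def by auto
  qed
  ultimately show "distinct \<gamma> \<and> pairwise disjnt (set \<gamma>)" ..
next
  assume "distinct \<gamma> \<and> pairwise disjnt (set \<gamma>)"
  then show "\<forall>i<length \<gamma>. \<forall>j<length \<gamma>. i \<noteq> j \<longrightarrow> \<gamma> ! i \<inter> \<gamma> ! j = {}"
    by (metis disjnt_def nth_eq_iff_index_eq nth_mem pairwiseD)
qed

lemma compositions_eq_compositions_on: "compositions n = compositions_on {1..n}"
proof (rule set_eqI)
  fix \<gamma> :: "nat set list"
  show "\<gamma> \<in> compositions n \<longleftrightarrow> \<gamma> \<in> compositions_on {1..n}"
  proof (cases "{} \<in> set \<gamma>")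
    case True
    then show ?thesis
      unfolding compositions_def compositions_on_def by auto
  next
    case False
    then show ?thesis
      unfolding compositions_def compositions_on_def mem_Collect_eq
        nth_disjoint_iff_distinct_pairwise_disjnt[OF False] by blast
  qed
qed

lemma compositions_onD:
  assumes "\<gamma> \<in> compositions_on A"
  shows "{} \<notin> set \<gamma>" "distinct \<gamma>" "pairwise disjnt (set \<gamma>)" "\<Union>(set \<gamma>) = A"
  using assms unfolding compositions_on_def by blast+

lemma finite_compositions_on:
  assumes "finite A"
  shows "finite (compositions_on A)"
proof (rule finite_subset)
  show "compositions_on A \<subseteq> {xs. set xs \<subseteq> Pow A \<and> length xs \<le> card (Pow A)}"
  proof (rule subsetI, rule CollectI, rule conjI)
    fix \<gamma> assume "\<gamma> \<in> compositions_on A"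
    then show "set \<gamma> \<subseteq> Pow A"
      unfolding compositions_on_def by auto
  next
    fix \<gamma> assume "\<gamma> \<in> compositions_on A"
    then have "distinct \<gamma>" and sub: "set \<gamma> \<subseteq> Pow A"
      unfolding compositions_on_def by auto
    then have "length \<gamma> = card (set \<gamma>)"
      by (simp add: distinct_card)
    also have "\<dots> \<le> card (Pow A)"
      using sub assms by (intro card_mono) auto
    finally show "length \<gamma> \<le> card (Pow A)" .
  qed
  show "finite {xs. set xs \<subseteq> Pow A \<and> length xs \<le> card (Pow A)}"
    using assms by (intro finite_lists_length_le) simp
qed

definition add_to_block :: "'a \<Rightarrow> 'a set list \<Rightarrow> nat \<Rightarrow> 'a set list" where
  "add_to_block a \<gamma> i = \<gamma>[i := insert a (\<gamma> ! i)]"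

definition insert_singleton :: "'a \<Rightarrow> 'a set list \<Rightarrow> nat \<Rightarrow> 'a set list" where
  "insert_singleton a \<gamma> k = take k \<gamma> @ {a} # drop k \<gamma>"

definition remove_from_blocks :: "'a \<Rightarrow> 'a set list \<Rightarrow> 'a set list" where
  "remove_from_blocks a \<gamma> = filter (\<lambda>B. B \<noteq> {}) (map (\<lambda>B. B - {a}) \<gamma>)"

lemma remove_from_blocks_append:
  "remove_from_blocks a (xs @ ys) = remove_from_blocks a xs @ remove_from_blocks a ys"
  unfolding remove_from_blocks_def by simp

lemma remove_from_blocks_id:
  assumes "{} \<notin> set \<gamma>" "a \<notin> \<Union>(set \<gamma>)"
  shows "remove_from_blocks a \<gamma> = \<gamma>"
proof -
  have "map (\<lambda>B. B - {a}) \<gamma> = \<gamma>"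
    using assms(2) by (induction \<gamma>) auto
  then show ?thesis
    unfolding remove_from_blocks_def using assms(1) by (auto intro: filter_True)
qed

lemma add_to_block_in_compositions_on:
  assumes \<beta>: "\<beta> \<in> compositions_on A" and "a \<notin> A" "i < length \<beta>"
  shows "add_to_block a \<beta> i \<in> compositions_on (insert a A)"
proof -
  note \<beta>D = compositions_onD[OF \<beta>]
  have set_eq: "set (add_to_block a \<beta> i) = insert (insert a (\<beta> ! i)) (set \<beta> - {\<beta> ! i})"
    unfolding add_to_block_def using \<beta>D(2) \<open>i < length \<beta>\<close> by (rule set_update_distinct)
  have i: "\<beta> ! i \<in> set \<beta>" and a: "a \<notin> \<Union>(set \<beta>)"
    using \<beta>D(4) \<open>a \<notin> A\<close> \<open>i < length \<beta>\<close> by auto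
  have "distinct (add_to_block a \<beta> i)"
    unfolding add_to_block_def using \<beta>D(2) a by (intro distinct_list_update) auto
  moreover have "pairwise disjnt (set (add_to_block a \<beta> i))"
  proof -
    have "disjnt (insert a (\<beta> ! i)) C" if "C \<in> set \<beta> - {\<beta> ! i}" for C
      using pairwiseD[OF \<beta>D(3) i] that a unfolding disjnt_def by blast
    moreover have "pairwise disjnt (set \<beta> - {\<beta> ! i})"
      using \<beta>D(3) by (rule pairwise_subset) blast
    ultimately show ?thesis
      unfolding set_eq pairwise_insert using disjnt_sym by blast
  qed
  moreover have "{} \<notin> set (add_to_block a \<beta> i)" "\<Union>(set (add_to_block a \<beta> i)) = insert a A"
    unfolding set_eq using \<beta>D(1,4) i by auto
  ultimately show ?thesis
    unfolding compositions_on_def by blast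
qed

lemma insert_singleton_in_compositions_on:
  assumes \<beta>: "\<beta> \<in> compositions_on A" and "a \<notin> A"
  shows "insert_singleton a \<beta> k \<in> compositions_on (insert a A)"
proof -
  note \<beta>D = compositions_onD[OF \<beta>]
  have set_eq: "set (insert_singleton a \<beta> k) = insert {a} (set \<beta>)"
    unfolding insert_singleton_def
    by (metis Un_insert_right append_take_drop_id list.set(2) set_append)
  have a: "a \<notin> \<Union>(set \<beta>)"
    using \<beta>D(4) \<open>a \<notin> A\<close> by auto
  have "distinct (take k \<beta> @ drop k \<beta>)"
    using \<beta>D(2) by simp
  then have "distinct (insert_singleton a \<beta> k)"
    unfolding insert_singleton_def distinct_append using a
    by (auto dest: in_set_takeD in_set_dropD)
  moreover have "pairwise disjnt (set (insert_singleton a \<beta> k))"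
    unfolding set_eq pairwise_insert using \<beta>D(3) a by (auto simp: disjnt_def)
  moreover have "{} \<notin> set (insert_singleton a \<beta> k)" "\<Union>(set (insert_singleton a \<beta> k)) = insert a A"
    unfolding set_eq using \<beta>D(1,4) by auto
  ultimately show ?thesis
    unfolding compositions_on_def by blast
qed

lemma remove_from_blocks_in_compositions_on:
  assumes \<gamma>: "\<gamma> \<in> compositions_on (insert a A)" and "a \<notin> A"
  shows "remove_from_blocks a \<gamma> \<in> compositions_on A"
proof -
  note \<gamma>D = compositions_onD[OF \<gamma>]
  have set_eq: "set (remove_from_blocks a \<gamma>) = (\<lambda>B. B - {a}) ` set \<gamma> - {{}}"
    unfolding remove_from_blocks_def by auto
  have "\<Union>((\<lambda>B. B - {a}) ` set \<gamma> - {{}}) = \<Union>(set \<gamma>) - {a}"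
    by auto
  then have "\<Union>(set (remove_from_blocks a \<gamma>)) = A"
    unfolding set_eq using \<gamma>D(4) \<open>a \<notin> A\<close> by simp
  moreover have "inj_on (\<lambda>B. B - {a}) (set \<gamma>)"
  proof (rule inj_onI, rule ccontr)
    fix B C assume BC: "B \<in> set \<gamma>" "C \<in> set \<gamma>" "B - {a} = C - {a}" "B \<noteq> C"
    then have "B \<inter> C = {}"
      using pairwiseD[OF \<gamma>D(3)] unfolding disjnt_def by blast
    with BC(3) have "B \<subseteq> {a}" "C \<subseteq> {a}"
      by blast+
    with BC \<gamma>D(1) show False
      by (metis subset_singletonD)
  qed
  then have "distinct (remove_from_blocks a \<gamma>)"
    unfolding remove_from_blocks_def using \<gamma>D(2) by (simp add: distinct_map)
  moreover have "pairwise disjnt (set (remove_from_blocks a \<gamma>))"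
    unfolding set_eq using \<gamma>D(3) unfolding pairwise_def disjnt_def by blast
  moreover have "{} \<notin> set (remove_from_blocks a \<gamma>)"
    unfolding set_eq by blast
  ultimately show ?thesis
    unfolding compositions_on_def by blast
qed

lemma remove_from_blocks_add_to_block:
  assumes \<beta>: "\<beta> \<in> compositions_on A" and "a \<notin> A" "i < length \<beta>"
  shows "remove_from_blocks a (add_to_block a \<beta> i) = \<beta>"
proof -
  note \<beta>D = compositions_onD[OF \<beta>]
  have "map (\<lambda>B. B - {a}) (add_to_block a \<beta> i) = map (\<lambda>B. B - {a}) \<beta>"
    unfolding add_to_block_def using \<open>i < length \<beta>\<close> by (simp add: map_update list_update_same_conv)
  then have "remove_from_blocks a (add_to_block a \<beta> i) = remove_from_blocks a \<beta>"
    unfolding remove_from_blocks_def by (rule arg_cong)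
  also have "\<dots> = \<beta>"
    using \<beta>D(1,4) \<open>a \<notin> A\<close> by (intro remove_from_blocks_id) auto
  finally show ?thesis .
qed

lemma remove_from_blocks_insert_singleton:
  assumes \<beta>: "\<beta> \<in> compositions_on A" and "a \<notin> A"
  shows "remove_from_blocks a (insert_singleton a \<beta> k) = \<beta>"
proof -
  note \<beta>D = compositions_onD[OF \<beta>]
  have "{} \<notin> set (take k \<beta>)" "a \<notin> \<Union>(set (take k \<beta>))"
       "{} \<notin> set (drop k \<beta>)" "a \<notin> \<Union>(set (drop k \<beta>))"
    using \<beta>D(1,4) \<open>a \<notin> A\<close> set_take_subset[of k \<beta>] set_drop_subset[of k \<beta>] by auto
  moreover have "remove_from_blocks a ({a} # xs) = remove_from_blocks a xs" for xs
    unfolding remove_from_blocks_def by simp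
  ultimately show ?thesis
    unfolding insert_singleton_def remove_from_blocks_append by (simp add: remove_from_blocks_id)
qed

lemma add_to_block_eq_iff_index:
  assumes \<beta>: "\<beta> \<in> compositions_on A" and "a \<notin> A" "i < length \<beta>" "j < length \<beta>"
  shows "a \<in> add_to_block a \<beta> i ! j \<longleftrightarrow> j = i"
  using assms(2-) nth_mem[OF assms(4)] compositions_onD(4)[OF \<beta>]
  unfolding add_to_block_def by (cases "j = i") auto

lemma singleton_notin_add_to_block:
  assumes \<beta>: "\<beta> \<in> compositions_on A" and "a \<notin> A" "i < length \<beta>"
  shows "{a} \<notin> set (add_to_block a \<beta> i)"
proof -
  have "\<beta> ! i \<noteq> {}" "a \<notin> \<beta> ! i" "{a} \<notin> set \<beta>"
    using compositions_onD(1,4)[OF \<beta>] \<open>a \<notin> A\<close> nth_mem[OF \<open>i < length \<beta>\<close>] by auto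
  then have "{a} \<notin> insert (insert a (\<beta> ! i)) (set \<beta>)"
    by auto
  moreover have "set (\<beta>[i := insert a (\<beta> ! i)]) \<subseteq> insert (insert a (\<beta> ! i)) (set \<beta>)"
    by (rule set_update_subset_insert)
  ultimately show ?thesis
    unfolding add_to_block_def by blast
qed

lemma inj_on_add_to_block:
  assumes "a \<notin> A"
  shows "inj_on (\<lambda>(\<beta>, i). add_to_block a \<beta> i) (SIGMA \<beta>:compositions_on A. {..<length \<beta>})"
proof (rule inj_onI, clarsimp)
  fix \<beta> i \<beta>' i'
  assume \<beta>: "\<beta> \<in> compositions_on A" "i < length \<beta>" and \<beta>': "\<beta>' \<in> compositions_on A" "i' < length \<beta>'"
    and eq: "add_to_block a \<beta> i = add_to_block a \<beta>' i'"
  have "\<beta>' = remove_from_blocks a (add_to_block a \<beta>' i')"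
    using remove_from_blocks_add_to_block[OF \<beta>'(1) \<open>a \<notin> A\<close> \<beta>'(2)] by simp
  also have "\<dots> = \<beta>"
    unfolding eq[symmetric] by (rule remove_from_blocks_add_to_block[OF \<beta>(1) \<open>a \<notin> A\<close> \<beta>(2)])
  finally have "\<beta>' = \<beta>" .
  note index_iff = add_to_block_eq_iff_index[OF \<beta>(1) \<open>a \<notin> A\<close>]
  have "a \<in> add_to_block a \<beta> i' ! i"
    using eq index_iff[OF \<beta>(2) \<beta>(2)] \<open>\<beta>' = \<beta>\<close> by simp
  then show "\<beta> = \<beta>' \<and> i = i'"
    using index_iff[OF _ \<beta>(2), of i'] \<beta>'(2) \<open>\<beta>' = \<beta>\<close> by simp
qed

lemma inj_on_insert_singleton:
  assumes "a \<notin> A"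
  shows "inj_on (\<lambda>(\<beta>, k). insert_singleton a \<beta> k) (SIGMA \<beta>:compositions_on A. {..length \<beta>})"
proof (rule inj_onI, clarsimp)
  fix \<beta> k \<beta>' k'
  assume \<beta>: "\<beta> \<in> compositions_on A" "k \<le> length \<beta>" and \<beta>': "\<beta>' \<in> compositions_on A" "k' \<le> length \<beta>'"
    and eq: "insert_singleton a \<beta> k = insert_singleton a \<beta>' k'"
  have "\<beta>' = remove_from_blocks a (insert_singleton a \<beta>' k')"
    using remove_from_blocks_insert_singleton[OF \<beta>'(1) \<open>a \<notin> A\<close>] by simp
  also have "\<dots> = \<beta>"
    unfolding eq[symmetric] by (rule remove_from_blocks_insert_singleton[OF \<beta>(1) \<open>a \<notin> A\<close>])
  finally have "\<beta>' = \<beta>" .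
  have nth_k: "insert_singleton a \<beta> j ! j = {a}" "j < length (insert_singleton a \<beta> j)"
    if "j \<le> length \<beta>" for j
    using that unfolding insert_singleton_def by (simp_all add: nth_append)
  have "distinct (insert_singleton a \<beta> k')"
    using compositions_onD(2)[OF insert_singleton_in_compositions_on[OF \<beta>(1) \<open>a \<notin> A\<close>]] .
  moreover have "insert_singleton a \<beta> k' ! k = {a}" "k < length (insert_singleton a \<beta> k')"
    using nth_k[OF \<beta>(2)] eq \<open>\<beta>' = \<beta>\<close> by simp_all
  ultimately show "\<beta> = \<beta>' \<and> k = k'"
    using nth_k \<beta>'(2) \<open>\<beta>' = \<beta>\<close> nth_eq_iff_index_eq by metis
qed

lemma compositions_on_insert_cases:
  assumes \<gamma>: "\<gamma> \<in> compositions_on (insert a A)" and "a \<notin> A"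
  obtains \<beta> i where "\<beta> \<in> compositions_on A" "i < length \<beta>" "\<gamma> = add_to_block a \<beta> i"
    | \<beta> k where "\<beta> \<in> compositions_on A" "k \<le> length \<beta>" "\<gamma> = insert_singleton a \<beta> k"
proof -
  note \<gamma>D = compositions_onD[OF \<gamma>]
  define \<beta> where "\<beta> = remove_from_blocks a \<gamma>"
  have \<beta>: "\<beta> \<in> compositions_on A"
    unfolding \<beta>_def using \<gamma> \<open>a \<notin> A\<close> by (rule remove_from_blocks_in_compositions_on)
  obtain xs B ys where \<gamma>_eq: "\<gamma> = xs @ B # ys" and "a \<in> B"
    using \<gamma>D(4) by (metis UnionE insertI1 split_list)
  have "B \<notin> set xs \<union> set ys"
    using \<gamma>D(2) \<gamma>_eq by auto
  then have "a \<notin> \<Union>(set xs \<union> set ys)"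
    using \<gamma>D(3) \<gamma>_eq \<open>a \<in> B\<close> unfolding pairwise_def disjnt_def by fastforce
  then have "remove_from_blocks a xs = xs" "remove_from_blocks a ys = ys"
    using \<gamma>D(1) \<gamma>_eq by (auto intro!: remove_from_blocks_id)
  moreover have "\<gamma> = xs @ [B] @ ys"
    using \<gamma>_eq by simp
  ultimately have \<beta>_eq: "\<beta> = xs @ remove_from_blocks a [B] @ ys"
    unfolding \<beta>_def by (simp only: remove_from_blocks_append)
  show ?thesis
  proof (cases "B = {a}")
    case True
    then have "\<beta> = xs @ ys" "\<gamma> = insert_singleton a \<beta> (length xs)"
      using \<beta>_eq \<gamma>_eq by (simp_all add: remove_from_blocks_def insert_singleton_def)
    with \<beta> show ?thesis
      by (intro that(2)) simp_all
  next
    case False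
    then have "\<beta> = xs @ (B - {a}) # ys" "\<gamma> = add_to_block a \<beta> (length xs)"
      using \<beta>_eq \<gamma>_eq \<open>a \<in> B\<close> by (auto simp: remove_from_blocks_def add_to_block_def insert_absorb)
    with \<beta> show ?thesis
      by (intro that(1)) simp_all
  qed
qed

lemma compositions_on_insert:
  assumes "a \<notin> A"
  shows "compositions_on (insert a A) =
    (\<lambda>(\<beta>, i). add_to_block a \<beta> i) ` (SIGMA \<beta>:compositions_on A. {..<length \<beta>}) \<union>
    (\<lambda>(\<beta>, k). insert_singleton a \<beta> k) ` (SIGMA \<beta>:compositions_on A. {..length \<beta>})"
    (is "_ = ?J \<union> ?S")
proof
  show "?J \<union> ?S \<subseteq> compositions_on (insert a A)"
    using add_to_block_in_compositions_on insert_singleton_in_compositions_on assms by fast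
  show "compositions_on (insert a A) \<subseteq> ?J \<union> ?S"
  proof
    fix \<gamma> assume "\<gamma> \<in> compositions_on (insert a A)"
    then show "\<gamma> \<in> ?J \<union> ?S"
      using assms by (cases rule: compositions_on_insert_cases) force+
  qed
qed

lemma sum_compositions_on_insert:
  fixes F :: "'a set list \<Rightarrow> 'b::comm_monoid_add"
  assumes "a \<notin> A" "finite A"
  shows "(\<Sum>\<gamma>\<in>compositions_on (insert a A). F \<gamma>) =
    (\<Sum>\<beta>\<in>compositions_on A.
       (\<Sum>i<length \<beta>. F (add_to_block a \<beta> i)) + (\<Sum>k\<le>length \<beta>. F (insert_singleton a \<beta> k)))"
proof -
  let ?J = "SIGMA \<beta>:compositions_on A. {..<length \<beta>}"
  let ?S = "SIGMA \<beta>:compositions_on A. {..length \<beta>}"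
  let ?add = "\<lambda>(\<beta>, i). add_to_block a \<beta> i" and ?ins = "\<lambda>(\<beta>, k). insert_singleton a \<beta> k"
  have fin: "finite (compositions_on A)" "finite ?J" "finite ?S"
    using finite_compositions_on[OF \<open>finite A\<close>] by auto
  have "?add ` ?J \<inter> ?ins ` ?S = {}"
    using singleton_notin_add_to_block[OF _ \<open>a \<notin> A\<close>]
    by (fastforce simp: insert_singleton_def)
  then have "(\<Sum>\<gamma>\<in>compositions_on (insert a A). F \<gamma>) = sum F (?add ` ?J) + sum F (?ins ` ?S)"
    unfolding compositions_on_insert[OF \<open>a \<notin> A\<close>] using fin by (intro sum.union_disjoint) auto
  also have "\<dots> = sum (F \<circ> ?add) ?J + sum (F \<circ> ?ins) ?S"
    by (simp only: sum.reindex[OF inj_on_add_to_block[OF \<open>a \<notin> A\<close>]]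
        sum.reindex[OF inj_on_insert_singleton[OF \<open>a \<notin> A\<close>]])
  also have "\<dots> = (\<Sum>\<beta>\<in>compositions_on A.
       (\<Sum>i<length \<beta>. F (add_to_block a \<beta> i)) + (\<Sum>k\<le>length \<beta>. F (insert_singleton a \<beta> k)))"
    using fin by (simp add: sum.Sigma sum.distrib prod.case_distrib)
  finally show ?thesis .
qed

lemma Union_set_update_insert:
  "i < length xs \<Longrightarrow> \<Union>(set (xs[i := insert a (xs ! i)])) = insert a (\<Union>(set xs))"
proof (induction xs arbitrary: i)
  case (Cons x xs)
  then show ?case
    by (cases i) auto
qed simp

lemma upsilon_add_to_block:
  assumes "i < length \<beta>"
  shows "upsilon (add_to_block a \<beta> i) l = (if i < l then insert a (upsilon \<beta> l) else upsilon \<beta> l)"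
proof (cases "i < l")
  case True
  have "take l (add_to_block a \<beta> i) = (take l \<beta>)[i := insert a (take l \<beta> ! i)]"
    unfolding add_to_block_def using True by (simp add: take_update_swap)
  moreover have "i < length (take l \<beta>)"
    using True assms by simp
  ultimately show ?thesis
    unfolding upsilon_def using True Union_set_update_insert[of i "take l \<beta>" a] by simp
next
  case False
  then show ?thesis
    unfolding upsilon_def add_to_block_def by (simp add: take_update_cancel)
qed

lemma upsilon_insert_singleton:
  assumes "k \<le> length \<beta>"
  shows "upsilon (insert_singleton a \<beta> k) l =
    (if l \<le> k then upsilon \<beta> l else insert a (upsilon \<beta> (l - 1)))"
proof (cases "l \<le> k")
  case True
  then have "take l (insert_singleton a \<beta> k) = take l \<beta>"
    unfolding insert_singleton_def using assms by (simp add: take_append min_def)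
  then show ?thesis
    unfolding upsilon_def using True by simp
next
  case False
  then have "take l (insert_singleton a \<beta> k) = take k \<beta> @ {a} # take (l - 1 - k) (drop k \<beta>)"
    unfolding insert_singleton_def using assms by (simp add: take_append take_Cons')
  moreover have "take k \<beta> @ take (l - 1 - k) (drop k \<beta>) = take (l - 1) \<beta>"
    using False take_add[of k "l - 1 - k" \<beta>] by simp
  ultimately have "set (take l (insert_singleton a \<beta> k)) = insert {a} (set (take (l - 1) \<beta>))"
    by (metis Un_insert_right set_append list.set(2))
  then show ?thesis
    unfolding upsilon_def using False by simp
qed

lemma nth_insert_singleton:
  assumes "k \<le> length \<beta>" "l \<le> length \<beta>"
  shows "insert_singleton a \<beta> k ! l = (if l < k then \<beta> ! l else if l = k then {a} else \<beta> ! (l - 1))"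
  using assms unfolding insert_singleton_def
  by (auto simp: nth_append nth_Cons' min_def)

lemma upsilon_0 [simp]: "upsilon \<beta> 0 = {}"
  unfolding upsilon_def by simp

lemma upsilon_subset:
  assumes "\<beta> \<in> compositions_on A"
  shows "upsilon \<beta> l \<subseteq> A"
  using compositions_onD(4)[OF assms] set_take_subset[of l \<beta>] unfolding upsilon_def by blast

lemma upsilon_length:
  assumes "\<beta> \<in> compositions_on A"
  shows "upsilon \<beta> (length \<beta>) = A"
  using compositions_onD(4)[OF assms] unfolding upsilon_def by simp

lemma upsilon_nonempty:
  assumes \<beta>: "\<beta> \<in> compositions_on A" and "0 < l" "l \<le> length \<beta>"
  shows "upsilon \<beta> l \<noteq> {}"
proof -
  have "0 < length \<beta>"
    using assms by linarith
  then have "\<beta> ! 0 \<in> set \<beta>"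
    by (rule nth_mem)
  then have "\<beta> ! 0 \<noteq> {}"
    using compositions_onD(1)[OF \<beta>] by auto
  moreover have "\<beta> ! 0 \<in> set (take l \<beta>)"
    using nth_mem[of 0 "take l \<beta>"] assms by simp
  ultimately show ?thesis
    unfolding upsilon_def by blast
qed

lemma upsilon_ne_whole:
  assumes \<beta>: "\<beta> \<in> compositions_on A" and "l < length \<beta>"
  shows "upsilon \<beta> l \<noteq> A"
proof
  assume "upsilon \<beta> l = A"
  have "drop l \<beta> = \<beta> ! l # drop (Suc l) \<beta>"
    using \<open>l < length \<beta>\<close> by (rule Cons_nth_drop_Suc[symmetric])
  then have in_drop: "\<beta> ! l \<in> set (drop l \<beta>)"
    by simp
  have in_set: "\<beta> ! l \<in> set \<beta>"
    using \<open>l < length \<beta>\<close> by (rule nth_mem)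
  have take_drop: "set (take l \<beta>) \<inter> set (drop l \<beta>) = {}"
    using compositions_onD(2)[OF \<beta>] by (rule set_take_disj_set_drop_if_distinct) simp
  have "disjnt (\<beta> ! l) B" if "B \<in> set (take l \<beta>)" for B
  proof (rule pairwiseD[OF compositions_onD(3)[OF \<beta>] in_set])
    show "B \<in> set \<beta>"
      using that set_take_subset by fast
    show "\<beta> ! l \<noteq> B"
      using that in_drop take_drop by blast
  qed
  then have "\<beta> ! l \<inter> upsilon \<beta> l = {}"
    unfolding upsilon_def disjnt_def by blast
  moreover have "\<beta> ! l \<subseteq> A" "\<beta> ! l \<noteq> {}"
    using compositions_onD(1,4)[OF \<beta>] in_set by auto
  ultimately show False
    using \<open>upsilon \<beta> l = A\<close> by blast
qed

lemma card_add_to_block_nth: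
  assumes \<beta>: "\<beta> \<in> compositions_on A" and "finite A" "a \<notin> A" "i < length \<beta>" "l < length \<beta>"
  shows "card (add_to_block a \<beta> i ! l) = (if l = i then Suc (card (\<beta> ! l)) else card (\<beta> ! l))"
proof -
  have "finite (\<beta> ! i)" "a \<notin> \<beta> ! i"
    using compositions_onD(4)[OF \<beta>] nth_mem[OF assms(4)] assms(2,3) by (auto intro: finite_subset)
  then show ?thesis
    unfolding add_to_block_def using assms(5) by (cases "l = i") simp_all
qed

lemma prod_upsilon_add_to_block:
  assumes \<beta>: "\<beta> \<in> compositions_on A" and "finite A" "a \<notin> A" "i < length \<beta>"
  shows "(\<Prod>j\<in>upsilon (add_to_block a \<beta> i) l. t j) =
    (if i < l then t a * (\<Prod>j\<in>upsilon \<beta> l. t j) else \<Prod>j\<in>upsilon \<beta> l. t j)"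
proof -
  have "finite (upsilon \<beta> l)" "a \<notin> upsilon \<beta> l"
    using upsilon_subset[OF \<beta>, of l] assms(2,3) finite_subset by auto
  then show ?thesis
    by (simp add: upsilon_add_to_block[OF assms(4)])
qed

lemma prod_upsilon_insert_singleton:
  assumes \<beta>: "\<beta> \<in> compositions_on A" and "finite A" "a \<notin> A" "k \<le> length \<beta>"
  shows "(\<Prod>j\<in>upsilon (insert_singleton a \<beta> k) l. t j) =
    (if l \<le> k then \<Prod>j\<in>upsilon \<beta> l. t j else t a * (\<Prod>j\<in>upsilon \<beta> (l - 1). t j))"
proof -
  have "finite (upsilon \<beta> (l - 1))" "a \<notin> upsilon \<beta> (l - 1)"
    using upsilon_subset[OF \<beta>, of "l - 1"] assms(2,3) finite_subset by auto
  then show ?thesis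
    by (simp add: upsilon_insert_singleton[OF assms(4)])
qed

section \<open>The Euler operator\<close>

lemma eul_0 [simp]: "eul 0 f = f"
  unfolding eul_def by simp

lemma eul_Suc: "eul (Suc k) f z = z * deriv (eul k f) z"
  unfolding eul_def theta_def by simp

lemma eul_1: "eul 1 f z = z * deriv f z"
  using eul_Suc[of 0] by simp

lemma analytic_on_eul: "f analytic_on S \<Longrightarrow> eul k f analytic_on S"
proof (induction k)
  case (Suc k)
  then have "(\<lambda>z. z * deriv (eul k f) z) analytic_on S"
    by (intro analytic_intros analytic_deriv)
  then show ?case
    by (simp add: eul_Suc[abs_def])
qed simp

lemma eul_has_field_derivative_at_1:
  assumes "f analytic_on {1}"
  shows "(eul k f has_field_derivative eul (Suc k) f 1) (at 1)"
  using analytic_on_imp_differentiable_at[OF analytic_on_eul[OF assms] singletonI]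
  by (simp add: DERIV_deriv_iff_field_differentiable eul_Suc)

definition eul_ratio :: "(complex \<Rightarrow> complex) \<Rightarrow> nat \<Rightarrow> complex \<Rightarrow> complex" where
  "eul_ratio f k z = eul k f z / f z"

lemma isCont_eul_ratio:
  assumes "f analytic_on {c}" "f c \<noteq> 0"
  shows "isCont (eul_ratio f k) c"
  unfolding eul_ratio_def[abs_def] using assms analytic_on_eul[OF assms(1)]
  by (intro isCont_divide analytic_at_imp_isCont) auto

lemma eul_ratio_has_field_derivative:
  assumes "f analytic_on {c}" "f c \<noteq> 0"
  shows "(eul_ratio f k has_field_derivative
           (deriv (eul k f) c * f c - eul k f c * deriv f c) / (f c * f c)) (at c)"
proof -
  have "(eul k f has_field_derivative deriv (eul k f) c) (at c)"
       "(f has_field_derivative deriv f c) (at c)"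
    using analytic_on_imp_differentiable_at[OF analytic_on_eul[OF assms(1)] singletonI]
      analytic_on_imp_differentiable_at[OF assms(1) singletonI]
    by (simp_all add: DERIV_deriv_iff_field_differentiable)
  then show ?thesis
    unfolding eul_ratio_def[abs_def] using assms(2)
    by (rule DERIV_divide[THEN DERIV_cong]) (simp add: power2_eq_square)
qed

lemma theta_eul_ratio:
  assumes "f analytic_on {c}" "f c \<noteq> 0"
  shows "c * deriv (eul_ratio f k) c = eul_ratio f (Suc k) c - eul_ratio f 1 c * eul_ratio f k c"
proof -
  have deriv_eq: "deriv (eul_ratio f k) c =
      (deriv (eul k f) c * f c - eul k f c * deriv f c) / (f c * f c)"
    by (rule DERIV_imp_deriv[OF eul_ratio_has_field_derivative[OF assms]])
  show ?thesis
    unfolding deriv_eq using assms(2) by (simp add: eul_ratio_def eul_Suc eul_1 field_simps)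
qed

lemma eventually_analytic_at:
  assumes "f analytic_on {z}"
  shows "eventually (\<lambda>w. f analytic_on {w}) (nhds z)"
proof -
  obtain S where "open S" "z \<in> S" "f holomorphic_on S"
    using assms analytic_at by blast
  then show ?thesis
    using holomorphic_on_imp_analytic_at eventually_nhds by metis
qed

lemma eventually_inverse_nhds_1:
  assumes "eventually P (nhds (1 :: complex))"
  shows "eventually (\<lambda>z. P (1 / z)) (nhds 1)"
proof -
  have "((\<lambda>z::complex. 1 / z) \<longlongrightarrow> 1 / 1) (nhds 1)"
    by (intro tendsto_divide tendsto_const filterlim_ident) simp
  then show ?thesis
    using assms by (simp add: eventually_compose_filterlim filterlim_def)
qed

lemma deriv_eq_0_if_inverse_invariant:
  fixes g :: "complex \<Rightarrow> complex"
  assumes "eventually (\<lambda>z. g (1 / z) = g z) (nhds 1)" "g field_differentiable at 1"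
  shows "deriv g 1 = 0"
proof -
  have g': "(g has_field_derivative deriv g 1) (at (1 / 1))"
    using assms(2) by (simp add: DERIV_deriv_iff_field_differentiable)
  have inverse': "((\<lambda>z. 1 / z) has_field_derivative - 1) (at (1 :: complex))"
    using DERIV_inverse[of "1 :: complex"] by (simp add: inverse_eq_divide)
  have "((\<lambda>z. g (1 / z)) has_field_derivative deriv g 1 * (- 1)) (at 1)"
    by (rule DERIV_chain2[OF g' inverse'])
  then have "(g has_field_derivative - deriv g 1) (at 1)"
    using DERIV_cong_ev[OF refl assms(1) refl] by simp
  then show ?thesis
    using DERIV_imp_deriv by fastforce
qed

section \<open>Sorting the terms of \<open>Phi\<close> by the block of \<open>1\<close>\<close>

definition Phi_term :: "(complex \<Rightarrow> complex) \<Rightarrow> (nat \<Rightarrow> complex) \<Rightarrow> nat set list \<Rightarrow> complex" where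
  "Phi_term f t \<gamma> = (-1) ^ length \<gamma> * eul (card (\<gamma> ! 0)) f 1 *
     (\<Prod>i\<in>{1..<length \<gamma>}. eul_ratio f (card (\<gamma> ! i)) (\<Prod>j\<in>upsilon \<gamma> i. t j))"

lemma Phi_eq_sum_Phi_term: "Phi f n t = (\<Sum>\<gamma>\<in>compositions_on {1..n}. Phi_term f t \<gamma>)"
  unfolding Phi_def Phi_term_def eul_ratio_def compositions_eq_compositions_on ..

text \<open>\<open>join_term f m b Q y i\<close> and \<open>singleton_term f m b Q y k\<close> are the values of \<open>Phi_term\<close> at
  \<open>add_to_block a \<beta> i\<close> and \<open>insert_singleton a \<beta> k\<close>, expressed through the length \<open>m\<close>, the block
  sizes \<open>b\<close> and the prefix products \<open>Q\<close> of \<open>\<beta>\<close>, and the variable \<open>y = t a\<close>.\<close>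
definition join_term ::
    "(complex \<Rightarrow> complex) \<Rightarrow> nat \<Rightarrow> (nat \<Rightarrow> nat) \<Rightarrow> (nat \<Rightarrow> complex) \<Rightarrow> complex \<Rightarrow> nat \<Rightarrow> complex"
  where
  "join_term f m b Q y i = (-1) ^ m * eul (if i = 0 then Suc (b 0) else b 0) f 1 *
     (\<Prod>l\<in>{1..<m}. if l < i then eul_ratio f (b l) (Q l)
                   else if l = i then eul_ratio f (Suc (b l)) (Q l)
                   else eul_ratio f (b l) (y * Q l))"

definition singleton_term ::
    "(complex \<Rightarrow> complex) \<Rightarrow> nat \<Rightarrow> (nat \<Rightarrow> nat) \<Rightarrow> (nat \<Rightarrow> complex) \<Rightarrow> complex \<Rightarrow> nat \<Rightarrow> complex"
  where
  "singleton_term f m b Q y k = (-1) ^ Suc m * eul (if k = 0 then 1 else b 0) f 1 *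
     (\<Prod>l\<in>{1..<Suc m}. if l < k then eul_ratio f (b l) (Q l)
                  else if l = k then eul_ratio f 1 (Q l)
                  else eul_ratio f (b (l - 1)) (y * Q (l - 1)))"

lemma Phi_term_add_to_block:
  assumes \<beta>: "\<beta> \<in> compositions_on A" and "finite A" "a \<notin> A" "i < length \<beta>"
  shows "Phi_term f t (add_to_block a \<beta> i) =
    join_term f (length \<beta>) (\<lambda>l. card (\<beta> ! l)) (\<lambda>l. \<Prod>j\<in>upsilon \<beta> l. t j) (t a) i"
proof -
  let ?\<gamma> = "add_to_block a \<beta> i"
  note card_nth = card_add_to_block_nth[OF assms]
  have len: "length ?\<gamma> = length \<beta>"
    unfolding add_to_block_def by simp
  have "0 < length \<beta>"
    using assms(4) by linarith
  then have lead: "card (?\<gamma> ! 0) = (if i = 0 then Suc (card (\<beta> ! 0)) else card (\<beta> ! 0))"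
    using card_nth by auto
  have "Phi_term f t ?\<gamma> =
      (-1) ^ length \<beta> * eul (if i = 0 then Suc (card (\<beta> ! 0)) else card (\<beta> ! 0)) f 1 *
      (\<Prod>l\<in>{1..<length \<beta>}. eul_ratio f (card (?\<gamma> ! l)) (\<Prod>j\<in>upsilon ?\<gamma> l. t j))"
    unfolding Phi_term_def len lead ..
  also have "(\<Prod>l\<in>{1..<length \<beta>}. eul_ratio f (card (?\<gamma> ! l)) (\<Prod>j\<in>upsilon ?\<gamma> l. t j)) =
      (\<Prod>l\<in>{1..<length \<beta>}. if l < i then eul_ratio f (card (\<beta> ! l)) (\<Prod>j\<in>upsilon \<beta> l. t j)
       else if l = i then eul_ratio f (Suc (card (\<beta> ! l))) (\<Prod>j\<in>upsilon \<beta> l. t j)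
       else eul_ratio f (card (\<beta> ! l)) (t a * (\<Prod>j\<in>upsilon \<beta> l. t j)))"
    by (intro prod.cong) (auto simp: card_nth prod_upsilon_add_to_block[OF assms])
  finally show ?thesis
    unfolding join_term_def .
qed

lemma Phi_term_insert_singleton:
  assumes \<beta>: "\<beta> \<in> compositions_on A" and "finite A" "a \<notin> A" "k \<le> length \<beta>"
  shows "Phi_term f t (insert_singleton a \<beta> k) =
    singleton_term f (length \<beta>) (\<lambda>l. card (\<beta> ! l)) (\<lambda>l. \<Prod>j\<in>upsilon \<beta> l. t j) (t a) k"
proof -
  let ?\<gamma> = "insert_singleton a \<beta> k"
  have len: "length ?\<gamma> = Suc (length \<beta>)"
    unfolding insert_singleton_def using assms(4) by simp
  have lead: "card (?\<gamma> ! 0) = (if k = 0 then 1 else card (\<beta> ! 0))"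
    using nth_insert_singleton[OF assms(4), of 0 a] by simp
  have "Phi_term f t ?\<gamma> =
      (-1) ^ Suc (length \<beta>) * eul (if k = 0 then 1 else card (\<beta> ! 0)) f 1 *
      (\<Prod>l\<in>{1..<Suc (length \<beta>)}. eul_ratio f (card (?\<gamma> ! l)) (\<Prod>j\<in>upsilon ?\<gamma> l. t j))"
    unfolding Phi_term_def len lead ..
  also have "(\<Prod>l\<in>{1..<Suc (length \<beta>)}. eul_ratio f (card (?\<gamma> ! l)) (\<Prod>j\<in>upsilon ?\<gamma> l. t j)) =
      (\<Prod>l\<in>{1..<Suc (length \<beta>)}. if l < k then eul_ratio f (card (\<beta> ! l)) (\<Prod>j\<in>upsilon \<beta> l. t j)
       else if l = k then eul_ratio f 1 (\<Prod>j\<in>upsilon \<beta> l. t j)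
       else eul_ratio f (card (\<beta> ! (l - 1))) (t a * (\<Prod>j\<in>upsilon \<beta> (l - 1). t j)))"
    by (intro prod.cong)
      (auto simp: nth_insert_singleton[OF assms(4)] prod_upsilon_insert_singleton[OF assms])
  finally show ?thesis
    unfolding singleton_term_def .
qed

lemma Phi_eq_sum_join_singleton_terms:
  assumes "1 \<le> n"
  shows "Phi f n t = (\<Sum>\<beta>\<in>compositions_on {2..n}.
    (\<Sum>i<length \<beta>. join_term f (length \<beta>) (\<lambda>l. card (\<beta> ! l)) (\<lambda>l. \<Prod>j\<in>upsilon \<beta> l. t j) (t 1) i) +
    (\<Sum>k\<le>length \<beta>.
       singleton_term f (length \<beta>) (\<lambda>l. card (\<beta> ! l)) (\<lambda>l. \<Prod>j\<in>upsilon \<beta> l. t j) (t 1) k))"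
    (is "_ = ?rhs")
proof -
  have "{1..n} = insert 1 {2..n}"
    using assms by auto
  then have "Phi f n t = (\<Sum>\<beta>\<in>compositions_on {2..n}.
      (\<Sum>i<length \<beta>. Phi_term f t (add_to_block 1 \<beta> i)) +
      (\<Sum>k\<le>length \<beta>. Phi_term f t (insert_singleton 1 \<beta> k)))"
    unfolding Phi_eq_sum_Phi_term by (simp add: sum_compositions_on_insert)
  also have "\<dots> = ?rhs"
    by (intro sum.cong arg_cong2[where f = "(+)"] refl)
      (auto simp: Phi_term_add_to_block[where A = "{2..n}"]
        Phi_term_insert_singleton[where A = "{2..n}"])
  finally show ?thesis .
qed

section \<open>Functions odd under inversion with a simple zero at \<open>1\<close>\<close>

locale odd_simple_zero =
  fixes f :: "complex \<Rightarrow> complex"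
  assumes analytic_at_1: "f analytic_on {1}"
    and odd: "\<And>x. x \<noteq> 0 \<Longrightarrow> f analytic_on {x} \<Longrightarrow> f (1 / x) = - f x"
    and simple_zero: "eul 1 f 1 \<noteq> 0"
begin

lemma zero_at_1: "f 1 = 0"
  using odd[OF _ analytic_at_1] by simp

lemma has_field_derivative_at_1: "(f has_field_derivative eul 1 f 1) (at 1)"
  using eul_has_field_derivative_at_1[OF analytic_at_1, of 0] by simp

lemma eventually_near_1:
  "eventually (\<lambda>z. z \<noteq> 0 \<and> f analytic_on {z} \<and> f analytic_on {1 / z}) (nhds 1)"
proof -
  have "eventually (\<lambda>z. z \<noteq> 0) (nhds (1 :: complex))"
    by (rule t1_space_nhds) simp
  then show ?thesis
    using eventually_analytic_at[OF analytic_at_1]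
      eventually_inverse_nhds_1[OF eventually_analytic_at[OF analytic_at_1]]
    by eventually_elim simp
qed

lemma eventually_odd: "eventually (\<lambda>z. f (1 / z) = - f z) (nhds 1)"
  using eventually_near_1 by eventually_elim (simp add: odd)

lemma eul_1_inverse:
  assumes "z \<noteq> 0" "f analytic_on {z}" "f analytic_on {1 / z}"
    and odd_near: "eventually (\<lambda>w. f (1 / w) = - f w) (nhds z)"
  shows "eul 1 f (1 / z) = eul 1 f z"
proof -
  have f': "(f has_field_derivative deriv f (1 / z)) (at (1 / z))"
    using analytic_on_imp_differentiable_at[OF assms(3) singletonI]
    by (simp add: DERIV_deriv_iff_field_differentiable)
  have inverse': "((\<lambda>w. 1 / w) has_field_derivative - 1 / (z * z)) (at z)"
    using DERIV_inverse[OF \<open>z \<noteq> 0\<close>] by (simp add: inverse_eq_divide power2_eq_square)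
  have "deriv f (1 / z) * (- 1 / (z * z)) = deriv (\<lambda>w. f (1 / w)) z"
    by (rule DERIV_imp_deriv[OF DERIV_chain2[OF f' inverse'], symmetric])
  also have "\<dots> = deriv (\<lambda>w. - f w) z"
    by (rule deriv_cong_ev[OF odd_near refl])
  also have "\<dots> = - deriv f z"
    using analytic_on_imp_differentiable_at[OF assms(2) singletonI]
    by (intro DERIV_imp_deriv DERIV_minus) (simp add: DERIV_deriv_iff_field_differentiable)
  finally have "deriv f (1 / z) = z * z * deriv f z"
    using \<open>z \<noteq> 0\<close> by (simp add: field_simps)
  then show ?thesis
    unfolding eul_1 using \<open>z \<noteq> 0\<close> by (simp add: field_simps)
qed

lemma eventually_eul_1_inverse: "eventually (\<lambda>z. eul 1 f (1 / z) = eul 1 f z) (nhds 1)"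
  using eventually_near_1 eventually_eventually[THEN iffD2, OF eventually_odd]
  by eventually_elim (rule eul_1_inverse, auto)

lemma eventually_eul_ratio_1_inverse:
  "eventually (\<lambda>z. eul_ratio f 1 (1 / z) = - eul_ratio f 1 z) (nhds 1)"
  using eventually_eul_1_inverse eventually_odd
  by eventually_elim (simp add: eul_ratio_def)

lemma eul_2_at_1: "eul 2 f 1 = 0"
proof -
  have "eul 1 f field_differentiable at 1"
    using analytic_on_imp_differentiable_at[OF analytic_on_eul[OF analytic_at_1] singletonI] .
  then have "deriv (eul 1 f) 1 = 0"
    by (rule deriv_eq_0_if_inverse_invariant[OF eventually_eul_1_inverse])
  then show ?thesis
    using eul_Suc[of 1 f 1] by (simp add: numeral_2_eq_2)
qed

lemma leading_bracket_tendsto_0: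
  "((\<lambda>x. eul (Suc k) f 1 - eul 1 f 1 * eul_ratio f k x + eul k f 1 * eul_ratio f 1 x)
     \<longlongrightarrow> 0) (at 1)"
proof -
  define g where "g x = eul k f 1 * eul 1 f x - eul 1 f 1 * eul k f x" for x
  have g': "(g has_field_derivative eul k f 1 * eul 2 f 1 - eul 1 f 1 * eul (Suc k) f 1) (at 1)"
    unfolding g_def
    using eul_has_field_derivative_at_1[OF analytic_at_1, of 1]
      eul_has_field_derivative_at_1[OF analytic_at_1, of k]
    by (auto intro!: derivative_eq_intros simp: numeral_2_eq_2)
  have "((\<lambda>x. g x / f x) \<longlongrightarrow> - eul (Suc k) f 1) (at 1)"
    using zero_at_1 simple_zero eul_2_at_1
    by (rule_tac lhopital_complex_simple[OF g' has_field_derivative_at_1]) (simp_all add: g_def)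
  then have "((\<lambda>x. eul (Suc k) f 1 + g x / f x) \<longlongrightarrow> eul (Suc k) f 1 + - eul (Suc k) f 1) (at 1)"
    by (intro tendsto_add tendsto_const)
  moreover have "eul (Suc k) f 1 + g x / f x =
      eul (Suc k) f 1 - eul 1 f 1 * eul_ratio f k x + eul k f 1 * eul_ratio f 1 x" for x
    unfolding g_def eul_ratio_def by (simp add: diff_divide_distrib)
  ultimately show ?thesis
    by simp
qed

text \<open>Near the simple zero, \<open>eul_ratio f 1 x\<close> behaves like \<open>1 / (x - 1)\<close>.\<close>
lemma eul_ratio_1_times_increment_tendsto:
  assumes "(D has_field_derivative D') (at 1)" "D 1 = 0"
  shows "((\<lambda>x. eul_ratio f 1 x * D x) \<longlongrightarrow> D') (at 1)"
proof -
  have "((\<lambda>x. D x / f x) \<longlongrightarrow> D' / eul 1 f 1) (at 1)"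
    using assms(2) zero_at_1 simple_zero
    by (rule_tac lhopital_complex_simple[OF assms(1) has_field_derivative_at_1]) simp_all
  then have "((\<lambda>x. eul 1 f x * (D x / f x)) \<longlongrightarrow> eul 1 f 1 * (D' / eul 1 f 1)) (at 1)"
    using analytic_at_imp_isCont[OF analytic_on_eul[OF analytic_at_1]]
    by (intro tendsto_mult) (auto simp: isCont_def)
  then show ?thesis
    using simple_zero by (simp add: eul_ratio_def)
qed

lemma shifted_bracket_tendsto_0:
  assumes c: "(c has_field_derivative c') (at 1)" and "f analytic_on {c 1}" "f (c 1) \<noteq> 0"
  shows "((\<lambda>x. eul_ratio f (Suc k) (c x) - eul_ratio f 1 (c x) * eul_ratio f k (x * c x)
            - eul_ratio f 1 x * (eul_ratio f k (x * c x) - eul_ratio f k (c x))) \<longlongrightarrow> 0) (at 1)"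
proof -
  let ?p = "c 1" and ?r = "eul_ratio f k"
  have "(?r has_field_derivative deriv ?r ?p) (at ?p)"
    using DERIV_imp_deriv[OF eul_ratio_has_field_derivative[OF assms(2,3)]]
      eul_ratio_has_field_derivative[OF assms(2,3)] by simp
  then have r': "(?r has_field_derivative deriv ?r ?p) (at (1 * c 1))"
      "(?r has_field_derivative deriv ?r ?p) (at ?p)"
    by simp_all
  have xc: "((\<lambda>x. x * c x) has_field_derivative 1 * c 1 + c' * 1) (at 1)"
    by (rule DERIV_mult[OF DERIV_ident c])
  have "((\<lambda>x. ?r (x * c x) - ?r (c x)) has_field_derivative
      deriv ?r ?p * (1 * c 1 + c' * 1) - deriv ?r ?p * c') (at 1)"
    by (intro DERIV_diff DERIV_chain2[where g = "\<lambda>x. x * c x", OF r'(1) xc]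
        DERIV_chain2[where g = c, OF r'(2) c])
  then have increment:
      "((\<lambda>x. eul_ratio f 1 x * (?r (x * c x) - ?r (c x))) \<longlongrightarrow> ?p * deriv ?r ?p) (at 1)"
    by (intro eul_ratio_1_times_increment_tendsto) (auto simp: algebra_simps elim: DERIV_cong)
  have at_c: "((\<lambda>x. eul_ratio f j (c x)) \<longlongrightarrow> eul_ratio f j ?p) (at 1)"
    and at_xc: "((\<lambda>x. eul_ratio f j (x * c x)) \<longlongrightarrow> eul_ratio f j ?p) (at 1)" for j
    using DERIV_isCont[OF c] isCont_eul_ratio[OF assms(2,3)]
    by (auto intro!: isCont_tendsto_compose[where g = "eul_ratio f j"] tendsto_eq_intros
        simp: isCont_def)
  have "((\<lambda>x. eul_ratio f (Suc k) (c x) - eul_ratio f 1 (c x) * ?r (x * c x)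
      - eul_ratio f 1 x * (?r (x * c x) - ?r (c x))) \<longlongrightarrow>
      eul_ratio f (Suc k) ?p - eul_ratio f 1 ?p * ?r ?p - ?p * deriv ?r ?p) (at 1)"
    by (intro tendsto_diff[OF tendsto_diff[OF at_c tendsto_mult[OF at_c at_xc]] increment])
  then show ?thesis
    unfolding theta_eul_ratio[OF assms(2,3)] by simp
qed

end

section \<open>The terms belonging to one composition of \<open>{2..n}\<close>\<close>

lemma prod_piecewise_split:
  fixes u v w :: "nat \<Rightarrow> 'a::comm_monoid_mult"
  assumes "0 < k" "k < M"
  shows "(\<Prod>l\<in>{1..<M}. if l < k then u l else if l = k then w l else v l) =
    (\<Prod>l\<in>{1..<k}. u l) * w k * (\<Prod>l\<in>{Suc k..<M}. v l)"
proof -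
  let ?g = "\<lambda>l. if l < k then u l else if l = k then w l else v l"
  have "prod ?g {1..<M} = prod ?g {1..<k} * prod ?g {k..<M}"
    using assms by (intro prod.atLeastLessThan_concat[symmetric]) auto
  also have "prod ?g {k..<M} = ?g k * prod ?g {Suc k..<M}"
    using assms by (simp add: prod.atLeast_Suc_lessThan)
  also have "prod ?g {1..<k} = (\<Prod>l\<in>{1..<k}. u l)"
    by (rule prod.cong) auto
  also have "prod ?g {Suc k..<M} = (\<Prod>l\<in>{Suc k..<M}. v l)"
    by (rule prod.cong) auto
  finally show ?thesis
    by (simp add: mult.assoc)
qed

lemma prod_shift_down: "(\<Prod>l\<in>{Suc k..<Suc M}. g (l - 1)) = (\<Prod>l\<in>{k..<M}. g l)"
  using prod.shift_bounds_nat_ivl[of "\<lambda>l. g (l - 1)" k 1 M] by simp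

lemma prod_diff_telescope:
  fixes u v :: "nat \<Rightarrow> 'a::comm_ring_1"
  shows "(\<Prod>l\<in>{1..<M}. v l) - (\<Prod>l\<in>{1..<M}. u l) =
    (\<Sum>k\<in>{1..<M}. (\<Prod>l\<in>{1..<k}. u l) * (v k - u k) * (\<Prod>l\<in>{Suc k..<M}. v l))"
proof (induction M)
  case (Suc M)
  show ?case
  proof (cases "M = 0")
    case False
    then have split: "{1..<Suc M} = insert M {1..<M}"
      by auto
    have "(\<Prod>l\<in>{Suc k..<Suc M}. v l) = (\<Prod>l\<in>{Suc k..<M}. v l) * v M" if "k \<in> {1..<M}" for k
      using that by (simp add: prod.atLeastLessThan_Suc)
    then have "(\<Sum>k\<in>{1..<M}. (\<Prod>l\<in>{1..<k}. u l) * (v k - u k) * (\<Prod>l\<in>{Suc k..<Suc M}. v l)) =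
        (\<Sum>k\<in>{1..<M}. (\<Prod>l\<in>{1..<k}. u l) * (v k - u k) * (\<Prod>l\<in>{Suc k..<M}. v l)) * v M"
      unfolding sum_distrib_right by (intro sum.cong refl) (simp add: mult.assoc)
    then have "(\<Sum>k\<in>{1..<Suc M}. (\<Prod>l\<in>{1..<k}. u l) * (v k - u k) * (\<Prod>l\<in>{Suc k..<Suc M}. v l)) =
        (\<Prod>l\<in>{1..<M}. u l) * (v M - u M) + ((\<Prod>l\<in>{1..<M}. v l) - (\<Prod>l\<in>{1..<M}. u l)) * v M"
      unfolding split Suc.IH by simp
    also have "\<dots> = (\<Prod>l\<in>{1..<Suc M}. v l) - (\<Prod>l\<in>{1..<Suc M}. u l)"
      unfolding split by (simp add: algebra_simps)
    finally show ?thesis ..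
  qed simp
qed simp

locale block_chain = odd_simple_zero +
  fixes m :: nat and b :: "nat \<Rightarrow> nat" and q :: "complex \<Rightarrow> nat \<Rightarrow> complex"
  assumes m_pos: "0 < m"
    and q_0: "\<And>x. q x 0 = 1"
    and q_m: "\<And>x. q x m = 1 / x"
    and q_differentiable: "\<And>l. 0 < l \<Longrightarrow> l < m \<Longrightarrow> (\<lambda>x. q x l) field_differentiable at 1"
    and q_generic: "\<And>l. 0 < l \<Longrightarrow> l < m \<Longrightarrow> f analytic_on {q 1 l} \<and> f (q 1 l) \<noteq> 0"
begin

text \<open>The \<open>l\<close>-th factor of a term, when the new element lies in a later block (\<open>\<rho>\<close>) or in an
  earlier one (\<open>\<sigma>\<close>, the prefix product then carrying the extra factor \<open>x\<close>).\<close>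
definition \<rho> :: "complex \<Rightarrow> nat \<Rightarrow> complex" where
  "\<rho> x l = eul_ratio f (b l) (q x l)"

definition \<sigma> :: "complex \<Rightarrow> nat \<Rightarrow> complex" where
  "\<sigma> x l = eul_ratio f (b l) (x * q x l)"

definition leading_bracket :: "complex \<Rightarrow> complex" where
  "leading_bracket x =
     eul (Suc (b 0)) f 1 - eul 1 f 1 * eul_ratio f (b 0) x + eul (b 0) f 1 * eul_ratio f 1 x"

definition shifted_bracket :: "complex \<Rightarrow> nat \<Rightarrow> complex" where
  "shifted_bracket x k = eul_ratio f (Suc (b k)) (q x k) - eul_ratio f 1 (q x k) * \<sigma> x k
     - eul_ratio f 1 x * (\<sigma> x k - \<rho> x k)"

lemma join_term_first:
  "join_term f m b (q x) x 0 = (-1) ^ m * eul (Suc (b 0)) f 1 * (\<Prod>l\<in>{1..<m}. \<sigma> x l)"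
proof -
  have "(\<Prod>l\<in>{1..<m}. if l < 0 then eul_ratio f (b l) (q x l)
          else if l = 0 then eul_ratio f (Suc (b l)) (q x l)
          else eul_ratio f (b l) (x * q x l)) = (\<Prod>l\<in>{1..<m}. \<sigma> x l)"
    unfolding \<sigma>_def by (rule prod.cong) auto
  then show ?thesis
    unfolding join_term_def by simp
qed

lemma join_term_middle:
  assumes "0 < i" "i < m"
  shows "join_term f m b (q x) x i = (-1) ^ m * eul (b 0) f 1 *
    ((\<Prod>l\<in>{1..<i}. \<rho> x l) * eul_ratio f (Suc (b i)) (q x i) * (\<Prod>l\<in>{Suc i..<m}. \<sigma> x l))"
  unfolding join_term_def \<rho>_def \<sigma>_def prod_piecewise_split[OF assms] using assms by simp

lemma singleton_term_first:
  "singleton_term f m b (q x) x 0 =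
    - ((-1) ^ m * eul 1 f 1 * eul_ratio f (b 0) x * (\<Prod>l\<in>{1..<m}. \<sigma> x l))"
proof -
  have "(\<Prod>l\<in>{1..<Suc m}. if l < 0 then eul_ratio f (b l) (q x l)
          else if l = 0 then eul_ratio f 1 (q x l)
          else eul_ratio f (b (l - 1)) (x * q x (l - 1))) = (\<Prod>l\<in>{Suc 0..<Suc m}. \<sigma> x (l - 1))"
    unfolding \<sigma>_def by (rule prod.cong) auto
  also have "\<dots> = \<sigma> x 0 * (\<Prod>l\<in>{1..<m}. \<sigma> x l)"
    unfolding prod_shift_down using m_pos by (simp add: prod.atLeast_Suc_lessThan)
  finally show ?thesis
    unfolding singleton_term_def by (simp add: \<sigma>_def q_0)
qed

lemma singleton_term_middle:
  assumes "0 < k" "k < m"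
  shows "singleton_term f m b (q x) x k = - ((-1) ^ m * eul (b 0) f 1 *
    ((\<Prod>l\<in>{1..<k}. \<rho> x l) * eul_ratio f 1 (q x k) * \<sigma> x k * (\<Prod>l\<in>{Suc k..<m}. \<sigma> x l)))"
proof -
  have "k < Suc m"
    using assms by simp
  have "(\<Prod>l\<in>{Suc k..<Suc m}. \<sigma> x (l - 1)) = \<sigma> x k * (\<Prod>l\<in>{Suc k..<m}. \<sigma> x l)"
    unfolding prod_shift_down using assms by (simp add: prod.atLeast_Suc_lessThan)
  then show ?thesis
    unfolding singleton_term_def \<rho>_def prod_piecewise_split[OF assms(1) \<open>k < Suc m\<close>]
    using assms by (simp add: \<sigma>_def mult_ac)
qed

lemma singleton_term_last:
  "singleton_term f m b (q x) x m =
    - ((-1) ^ m * eul (b 0) f 1 * (\<Prod>l\<in>{1..<m}. \<rho> x l) * eul_ratio f 1 (1 / x))"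
proof -
  have "(\<Prod>l\<in>{1..<m}. if l < m then eul_ratio f (b l) (q x l)
          else if l = m then eul_ratio f 1 (q x l)
          else eul_ratio f (b (l - 1)) (x * q x (l - 1))) = (\<Prod>l\<in>{1..<m}. \<rho> x l)"
    unfolding \<rho>_def by (rule prod.cong) auto
  then show ?thesis
    unfolding singleton_term_def using m_pos by (simp add: prod.atLeastLessThan_Suc q_m mult_ac)
qed

lemma join_singleton_sum_eq:
  assumes "eul_ratio f 1 (1 / x) = - eul_ratio f 1 x"
  shows "(\<Sum>i<m. join_term f m b (q x) x i) + (\<Sum>k\<le>m. singleton_term f m b (q x) x k) =
    (-1) ^ m * ((\<Prod>l\<in>{1..<m}. \<sigma> x l) * leading_bracket x + eul (b 0) f 1 *
      (\<Sum>k\<in>{1..<m}. (\<Prod>l\<in>{1..<k}. \<rho> x l) * (\<Prod>l\<in>{Suc k..<m}. \<sigma> x l) * shifted_bracket x k))"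
proof -
  let ?L = "\<lambda>k. \<Prod>l\<in>{1..<k}. \<rho> x l" and ?R = "\<lambda>k. \<Prod>l\<in>{Suc k..<m}. \<sigma> x l"
  define S where "S = (-1 :: complex) ^ m"
  define A where "A = (\<Prod>l\<in>{1..<m}. \<rho> x l)"
  define B where "B = (\<Prod>l\<in>{1..<m}. \<sigma> x l)"
  define J where "J = (\<Sum>k\<in>{1..<m}. ?L k * eul_ratio f (Suc (b k)) (q x k) * ?R k)"
  define E where "E = (\<Sum>k\<in>{1..<m}. ?L k * eul_ratio f 1 (q x k) * \<sigma> x k * ?R k)"
  define T where "T = (\<Sum>k\<in>{1..<m}. ?L k * ?R k * shifted_bracket x k)"
  have "{..<m} = insert 0 {1..<m}" "{..m} = insert 0 (insert m {1..<m})"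
    using m_pos by auto
  then have joins:
      "(\<Sum>i<m. join_term f m b (q x) x i) = S * eul (Suc (b 0)) f 1 * B + S * eul (b 0) f 1 * J"
    and singletons: "(\<Sum>k\<le>m. singleton_term f m b (q x) x k) =
      - (S * eul 1 f 1 * eul_ratio f (b 0) x * B) + S * eul (b 0) f 1 * A * eul_ratio f 1 x
      - S * eul (b 0) f 1 * E"
    unfolding S_def A_def B_def J_def E_def using m_pos assms
    by (simp_all add: join_term_first join_term_middle singleton_term_first singleton_term_middle
        singleton_term_last sum_distrib_left sum_negf)
  have "T = J - E - eul_ratio f 1 x * (\<Sum>k\<in>{1..<m}. ?L k * (\<sigma> x k - \<rho> x k) * ?R k)"
    unfolding T_def J_def E_def shifted_bracket_def sum_distrib_left sum_subtractf[symmetric]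
    by (rule sum.cong[OF refl]) (simp add: algebra_simps)
  also have "(\<Sum>k\<in>{1..<m}. ?L k * (\<sigma> x k - \<rho> x k) * ?R k) = B - A"
    unfolding A_def B_def by (rule prod_diff_telescope[symmetric])
  finally have "T = J - E - eul_ratio f 1 x * (B - A)" .
  then show ?thesis
    unfolding joins singletons leading_bracket_def T_def[symmetric] B_def[symmetric]
      S_def[symmetric]
    by (simp only:) (simp add: algebra_simps)
qed

lemma \<rho>_tendsto: "l \<in> {1..<m} \<Longrightarrow> ((\<lambda>x. \<rho> x l) \<longlongrightarrow> \<rho> 1 l) (at 1)"
  and \<sigma>_tendsto: "l \<in> {1..<m} \<Longrightarrow> ((\<lambda>x. \<sigma> x l) \<longlongrightarrow> \<rho> 1 l) (at 1)"
proof -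
  assume l: "l \<in> {1..<m}"
  then have "isCont (\<lambda>x. q x l) 1" "isCont (eul_ratio f (b l)) (q 1 l)"
    using field_differentiable_imp_continuous_at[OF q_differentiable] isCont_eul_ratio q_generic
    by auto
  then show "((\<lambda>x. \<rho> x l) \<longlongrightarrow> \<rho> 1 l) (at 1)" "((\<lambda>x. \<sigma> x l) \<longlongrightarrow> \<rho> 1 l) (at 1)"
    unfolding \<rho>_def \<sigma>_def
    by (auto intro!: isCont_tendsto_compose[where g = "eul_ratio f (b l)"] tendsto_eq_intros
        simp: isCont_def)
qed

lemma shifted_bracket_tendsto:
  assumes "k \<in> {1..<m}"
  shows "((\<lambda>x. shifted_bracket x k) \<longlongrightarrow> 0) (at 1)"
proof -
  have "((\<lambda>x. q x k) has_field_derivative deriv (\<lambda>x. q x k) 1) (at 1)"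
    using q_differentiable assms by (simp add: DERIV_deriv_iff_field_differentiable)
  then show ?thesis
    unfolding shifted_bracket_def \<rho>_def \<sigma>_def using q_generic assms
    by (intro shifted_bracket_tendsto_0) auto
qed

lemma join_singleton_sum_tendsto_0:
  "((\<lambda>x. (\<Sum>i<m. join_term f m b (q x) x i) + (\<Sum>k\<le>m. singleton_term f m b (q x) x k))
     \<longlongrightarrow> 0) (at 1)"
proof -
  have "((\<lambda>x. (\<Prod>l\<in>{1..<k}. \<rho> x l) * (\<Prod>l\<in>{Suc k..<m}. \<sigma> x l) * shifted_bracket x k)
      \<longlongrightarrow> (\<Prod>l\<in>{1..<k}. \<rho> 1 l) * (\<Prod>l\<in>{Suc k..<m}. \<rho> 1 l) * 0) (at 1)"
    if "k \<in> {1..<m}" for k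
    using that by (intro tendsto_mult tendsto_prod \<rho>_tendsto \<sigma>_tendsto shifted_bracket_tendsto) auto
  then have "((\<lambda>x. \<Sum>k\<in>{1..<m}. (\<Prod>l\<in>{1..<k}. \<rho> x l) * (\<Prod>l\<in>{Suc k..<m}. \<sigma> x l) * shifted_bracket x k)
      \<longlongrightarrow> 0) (at 1)"
    by (intro tendsto_null_sum) simp
  moreover have "((\<lambda>x. \<Prod>l\<in>{1..<m}. \<sigma> x l) \<longlongrightarrow> (\<Prod>l\<in>{1..<m}. \<rho> 1 l)) (at 1)"
    by (intro tendsto_prod \<sigma>_tendsto)
  moreover have "(leading_bracket \<longlongrightarrow> 0) (at 1)"
    unfolding leading_bracket_def[abs_def] by (rule leading_bracket_tendsto_0)
  ultimately have "((\<lambda>x. (-1) ^ m * ((\<Prod>l\<in>{1..<m}. \<sigma> x l) * leading_bracket x + eul (b 0) f 1 *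
      (\<Sum>k\<in>{1..<m}. (\<Prod>l\<in>{1..<k}. \<rho> x l) * (\<Prod>l\<in>{Suc k..<m}. \<sigma> x l) * shifted_bracket x k)))
    \<longlongrightarrow> (-1) ^ m * ((\<Prod>l\<in>{1..<m}. \<rho> 1 l) * 0 + eul (b 0) f 1 * 0)) (at 1)"
    by (intro tendsto_mult tendsto_add tendsto_const)
  moreover have "eventually (\<lambda>x. eul_ratio f 1 (1 / x) = - eul_ratio f 1 x) (at 1)"
    using eventually_eul_ratio_1_inverse by (simp add: eventually_nhds_conv_at)
  then have "eventually (\<lambda>x.
      (\<Sum>i<m. join_term f m b (q x) x i) + (\<Sum>k\<le>m. singleton_term f m b (q x) x k) =
      (-1) ^ m * ((\<Prod>l\<in>{1..<m}. \<sigma> x l) * leading_bracket x + eul (b 0) f 1 *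
      (\<Sum>k\<in>{1..<m}. (\<Prod>l\<in>{1..<k}. \<rho> x l) * (\<Prod>l\<in>{Suc k..<m}. \<sigma> x l) * shifted_bracket x k))) (at 1)"
    by eventually_elim (rule join_singleton_sum_eq)
  ultimately show ?thesis
    using tendsto_cong by force
qed

end

lemma block_chain_prefix_products:
  assumes "odd_simple_zero f" and \<beta>: "\<beta> \<in> compositions_on A" and "A \<noteq> {}"
    and analytic: "\<And>j. j \<in> A \<Longrightarrow> (\<lambda>x. t x j) analytic_on {1}"
    and total: "\<And>x. (\<Prod>j\<in>A. t x j) = 1 / x"
    and generic: "\<And>T. T \<subseteq> A \<Longrightarrow> T \<noteq> {} \<Longrightarrow> T \<noteq> A \<Longrightarrow>
      f analytic_on {\<Prod>j\<in>T. t 1 j} \<and> f (\<Prod>j\<in>T. t 1 j) \<noteq> 0"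
  shows "block_chain f (length \<beta>) (\<lambda>x l. \<Prod>j\<in>upsilon \<beta> l. t x j)"
proof (unfold_locales)
  show "0 < length \<beta>"
    using compositions_onD(4)[OF \<beta>] \<open>A \<noteq> {}\<close> by (cases \<beta>) auto
  show "(\<Prod>j\<in>upsilon \<beta> (length \<beta>). t x j) = 1 / x" for x
    using total by (simp add: upsilon_length[OF \<beta>])
  show "(\<lambda>x. \<Prod>j\<in>upsilon \<beta> l. t x j) field_differentiable at 1" for l
    using analytic upsilon_subset[OF \<beta>]
    by (intro analytic_on_imp_differentiable_at[OF _ singletonI] analytic_on_prod) auto
  show "f analytic_on {\<Prod>j\<in>upsilon \<beta> l. t 1 j} \<and> f (\<Prod>j\<in>upsilon \<beta> l. t 1 j) \<noteq> 0"
    if "0 < l" "l < length \<beta>" for l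
    using generic upsilon_subset[OF \<beta>] upsilon_nonempty[OF \<beta>] upsilon_ne_whole[OF \<beta>] that by simp
qed (use assms(1) odd_simple_zero_def in auto)

lemma Phi_tendsto_0:
  assumes "odd_simple_zero f" "2 \<le> n" "\<And>x. t x 1 = x"
    and "\<And>j. j \<in> {2..n} \<Longrightarrow> (\<lambda>x. t x j) analytic_on {1}"
    and "\<And>x. (\<Prod>j\<in>{2..n}. t x j) = 1 / x"
    and "\<And>T. T \<subseteq> {2..n} \<Longrightarrow> T \<noteq> {} \<Longrightarrow> T \<noteq> {2..n} \<Longrightarrow>
      f analytic_on {\<Prod>j\<in>T. t 1 j} \<and> f (\<Prod>j\<in>T. t 1 j) \<noteq> 0"
  shows "((\<lambda>x. Phi f n (t x)) \<longlongrightarrow> 0) (at 1)"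
proof -
  have "((\<lambda>x.
      (\<Sum>i<length \<beta>. join_term f (length \<beta>) (\<lambda>l. card (\<beta> ! l)) (\<lambda>l. \<Prod>j\<in>upsilon \<beta> l. t x j) x i) +
      (\<Sum>k\<le>length \<beta>. singleton_term f (length \<beta>) (\<lambda>l. card (\<beta> ! l)) (\<lambda>l. \<Prod>j\<in>upsilon \<beta> l. t x j) x k))
      \<longlongrightarrow> 0) (at 1)" if "\<beta> \<in> compositions_on {2..n}" for \<beta>
    using assms
    by (intro block_chain.join_singleton_sum_tendsto_0 block_chain_prefix_products[OF _ that]) auto
  then show ?thesis
    using assms(2,3) by (simp add: Phi_eq_sum_join_singleton_terms tendsto_null_sum)
qed

theorem theorem11p3:
  fixes f :: "complex \<Rightarrow> complex" and n :: nat and s :: "nat \<Rightarrow> complex"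
  assumes mero: "f meromorphic_on (- {0})"
    and hol1: "f analytic_on {1}"
    and odd: "\<And>x. x \<noteq> 0 \<Longrightarrow> f analytic_on {x} \<Longrightarrow> f (1 / x) = - f x"
    and zero: "f 1 = 0"
    and simple: "eul 1 f 1 \<noteq> 0"
    and n2: "n \<ge> 2"
    and s_nz: "\<And>j. 2 \<le> j \<Longrightarrow> j < n \<Longrightarrow> s j \<noteq> 0"
    and generic: "\<And>T. T \<subseteq> {2..n} \<Longrightarrow> T \<noteq> {} \<Longrightarrow> T \<noteq> {2..n} \<Longrightarrow>
        f analytic_on {\<Prod>j\<in>T. (if j = n then 1 / (\<Prod>k\<in>{2..<n}. s k) else s j)} \<and>
        f (\<Prod>j\<in>T. (if j = n then 1 / (\<Prod>k\<in>{2..<n}. s k) else s j)) \<noteq> 0"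
  shows "((\<lambda>x. Phi f n (\<lambda>j. if j = 1 then x
                           else if j = n then 1 / (x * (\<Prod>k\<in>{2..<n}. s k))
                           else s j)) \<longlongrightarrow> 0) (at 1)"
proof -
  define S where "S = (\<Prod>k\<in>{2..<n}. s k)"
  define t where "t x j = (if j = 1 then x else if j = n then 1 / (x * S) else s j)" for x j
  have "S \<noteq> 0"
    unfolding S_def using s_nz by simp
  have "{2..n} = insert n {2..<n}"
    using n2 by auto
  moreover have "(\<Prod>j\<in>{2..<n}. t x j) = S" for x
    unfolding S_def t_def by (rule prod.cong) auto
  ultimately have "(\<Prod>j\<in>{2..n}. t x j) = 1 / x" for x
    using \<open>S \<noteq> 0\<close> n2 by (simp add: t_def)
  moreover have "(\<lambda>x. t x j) analytic_on {1}" if "j \<in> {2..n}" for j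
    unfolding t_def using that \<open>S \<noteq> 0\<close> by (cases "j = n") (auto intro!: analytic_intros)
  moreover have "(\<Prod>j\<in>T. t 1 j) = (\<Prod>j\<in>T. (if j = n then 1 / (\<Prod>k\<in>{2..<n}. s k) else s j))"
    if "T \<subseteq> {2..n}" for T
    unfolding t_def S_def using that by (intro prod.cong) auto
  moreover have "odd_simple_zero f"
    using hol1 odd simple by unfold_locales
  ultimately have "((\<lambda>x. Phi f n (t x)) \<longlongrightarrow> 0) (at 1)"
    using n2 generic by (intro Phi_tendsto_0) (auto simp: t_def)
  then show ?thesis
    unfolding t_def S_def .
qed

end
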